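(* Let $A,B$ be constant complex $(2\times2)$ matrices with $\operatorname{tr}A=0$ and $\det A\ge-\frac14$ (in particular $\det A$ is real). Let $y:(0,1]\to\mathbb{C}^2$ be a solution of $x\,y'(x)=(A+xB)y(x)$, $x\in(0,1]$. If $y\not\equiv0$, then there exists a constant $\varepsilon>0$ such that $|y(x)|\ge\varepsilon\sqrt{x}$ for all $x\in(0,1]$. *)

theory Defs
  imports "HOL-Analysis.Analysis"
begin

end

theory Submission
  imports Defs
begin

(* With A^2 = -d I and weight = d + 1/2 >= 1/4, the Lyapunov function
   f = weight |y|^2 + |Ay|^2 is comparable to |y|^2 and, along solutions of x y' = (A + xB) y,
   satisfies x f' = <Ay, y> + x h with |h| <= C f (here <u, v> is the real inner product, i.e. the
   real part of the Hermitian one).  Since <Ay, y> <= f, the function f(x) e^(-Cx) / x is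
   nonincreasing, so f(x) >= x e^(-C) f(1).  Since |<Ay, y>| <= 4 |A| f, the function
   f(x) e^(Mx) is nondecreasing on [x0, 1] for suitable M, so f(1) > 0 unless y vanishes
   identically.  Together, |y(x)|^2 >= f(x) / (weight + |A|^2) >= const * x. *)

lemma trace_zero_matrix_square_2:
  fixes A :: "'a::comm_ring_1^2^2"
  assumes "trace A = 0"
  shows "A ** A = mat (- det A)"
proof -
  have "A$2$2 = - A$1$1"
    using assms by (simp add: trace_def sum_2 eq_neg_iff_add_eq_0 add.commute)
  then show ?thesis
    by (simp add: vec_eq_iff forall_2 sum_2 det_2 matrix_matrix_mult_def mat_def algebra_simps)
qed

lemma mat_of_real_mult_vector: "mat (of_real c) *v v = c *\<^sub>R (v :: 'a::real_algebra_1^'n)"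
  by (simp add: vec_eq_iff matrix_vector_mult_def mat_def mult_delta_left)
    (simp add: scaleR_conv_of_real)

lemma of_real_vector_scalar_mult: "of_real c *s v = c *\<^sub>R (v :: 'a::real_algebra_1^'n)"
  by (simp add: vec_eq_iff) (simp add: scaleR_conv_of_real)

lemma scaleR_matrix_vector_mult: "(c *\<^sub>R A) *v v = c *\<^sub>R (A *v v)"
  for A :: "'a::real_algebra_1^'n^'m"
  by (simp add: vec_eq_iff matrix_vector_mult_def scaleR_sum_right)

lemma has_real_derivative_norm_power2:
  fixes u :: "real \<Rightarrow> 'a::real_inner"
  assumes "(u has_vector_derivative u') (at t within S)"
  shows "((\<lambda>t. (norm (u t))\<^sup>2) has_real_derivative 2 * inner u' (u t)) (at t within S)"
proof -
  have "((\<lambda>t. inner (u t) (u t)) has_vector_derivative inner (u t) u' + inner u' (u t))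
      (at t within S)"
    by (rule bounded_bilinear.has_vector_derivative[OF bounded_bilinear_inner assms assms])
  then show ?thesis
    by (simp add: power2_norm_eq_inner has_real_derivative_iff_has_vector_derivative inner_commute)
qed

lemma nondecreasing_if_has_real_derivative_nonneg:
  fixes F :: "real \<Rightarrow> real"
  assumes "a \<le> b"
    and "\<And>t. t \<in> {a..b} \<Longrightarrow> (F has_real_derivative F' t) (at t within {a..b})"
    and "\<And>t. t \<in> {a..b} \<Longrightarrow> 0 \<le> F' t"
  shows "F a \<le> F b"
proof -
  obtain t where "t \<in> {a..b}" "F b - F a = F' t * (b - a)"
    using mvt_very_simple[OF assms(1), of F "\<lambda>t. (*) (F' t)"] assms(2)
    by (auto simp: has_field_derivative_def)
  with assms(1,3) show ?thesis
    by (metis diff_ge_0_iff_ge mult_nonneg_nonneg)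
qed

lemma exp_scaled_mono_if_deriv_ge:
  fixes f f' :: "real \<Rightarrow> real"
  assumes "a \<le> b"
    and deriv: "\<And>t. t \<in> {a..b} \<Longrightarrow> (f has_real_derivative f' t) (at t within {a..b})"
    and ge: "\<And>t. t \<in> {a..b} \<Longrightarrow> - M * f t \<le> f' t"
  shows "f a * exp (M * a) \<le> f b * exp (M * b)"
proof (rule nondecreasing_if_has_real_derivative_nonneg[OF assms(1)])
  fix t assume t: "t \<in> {a..b}"
  show "((\<lambda>t. f t * exp (M * t)) has_real_derivative (f' t + M * f t) * exp (M * t))
      (at t within {a..b})"
    using deriv[OF t] by (auto intro!: derivative_eq_intros simp: algebra_simps)
  show "0 \<le> (f' t + M * f t) * exp (M * t)"
    using ge[OF t] by simp
qed

lemma exp_scaled_div_antimono_if_deriv_le: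
  fixes f f' :: "real \<Rightarrow> real"
  assumes "0 < a" "a \<le> b"
    and deriv: "\<And>t. t \<in> {a..b} \<Longrightarrow> (f has_real_derivative f' t) (at t within {a..b})"
    and le: "\<And>t. t \<in> {a..b} \<Longrightarrow> t * f' t \<le> (1 + C * t) * f t"
  shows "f b * exp (- C * b) / b \<le> f a * exp (- C * a) / a"
proof -
  have "- (f a * exp (- C * a) / a) \<le> - (f b * exp (- C * b) / b)"
  proof (rule nondecreasing_if_has_real_derivative_nonneg[OF assms(2)])
    fix t assume t: "t \<in> {a..b}"
    then have "0 < t"
      using assms(1) by auto
    show "((\<lambda>t. - (f t * exp (- C * t) / t)) has_real_derivative
        ((1 + C * t) * f t - t * f' t) * exp (- C * t) / t\<^sup>2) (at t within {a..b})"
      using deriv[OF t] \<open>0 < t\<close>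
      by (auto intro!: derivative_eq_intros simp: field_simps power2_eq_square)
    show "0 \<le> ((1 + C * t) * f t - t * f' t) * exp (- C * t) / t\<^sup>2"
      using le[OF t] by simp
  qed
  then show ?thesis
    by simp
qed

locale regular_singular_system =
  fixes A B :: "complex^'n^'n" and d :: real and y y' :: "real \<Rightarrow> complex^'n"
  assumes A_square: "A ** A = mat (of_real (- d))"
    and d_ge: "d \<ge> - 1/4"
    and deriv: "\<And>x. x \<in> {0<..1} \<Longrightarrow> (y has_vector_derivative y' x) (at x within {0<..1})"
    and ode: "\<And>x. x \<in> {0<..1} \<Longrightarrow> of_real x *s y' x = (A + x *\<^sub>R B) *v y x"
begin

(* chosen so that <A^2 y, Ay> = -d <y, Ay> and weight <Ay, y> combine to <Ay, y> in x f' *)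
definition "weight = d + 1/2"
definition "lyap t = weight * (norm (y t))\<^sup>2 + (norm (A *v y t))\<^sup>2"
definition "lyap' t = 2 * weight * inner (y' t) (y t) + 2 * inner (A *v y' t) (A *v y t)"
definition "perturbation t =
  2 * weight * inner (B *v y t) (y t) + 2 * inner (A *v (B *v y t)) (A *v y t)"
definition "norm_A = onorm ((*v) A)"
definition "norm_B = onorm ((*v) B)"
definition "perturbation_bound = 8 * (weight + norm_A\<^sup>2) * norm_B"

lemma weight_ge: "1/4 \<le> weight"
  using d_ge by (simp add: weight_def)

lemma norm_A_nonneg: "0 \<le> norm_A"
  unfolding norm_A_def by (rule onorm_pos_le[OF matrix_vector_mul_bounded_linear])

lemma norm_B_nonneg: "0 \<le> norm_B"
  unfolding norm_B_def by (rule onorm_pos_le[OF matrix_vector_mul_bounded_linear])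

lemma norm_A_apply_le: "norm (A *v v) \<le> norm_A * norm v"
  unfolding norm_A_def by (rule onorm[OF matrix_vector_mul_bounded_linear])

lemma norm_B_apply_le: "norm (B *v v) \<le> norm_B * norm v"
  unfolding norm_B_def by (rule onorm[OF matrix_vector_mul_bounded_linear])

lemma perturbation_bound_nonneg: "0 \<le> perturbation_bound"
  using weight_ge norm_B_nonneg by (simp add: perturbation_bound_def)

lemma A_square_apply: "A *v (A *v v) = (- d) *\<^sub>R v"
  by (metis matrix_vector_mul_assoc A_square mat_of_real_mult_vector)

lemma ode_scaleR: "x \<in> {0<..1} \<Longrightarrow> x *\<^sub>R y' x = A *v y x + x *\<^sub>R (B *v y x)"
  using ode[of x]
  by (simp add: of_real_vector_scalar_mult matrix_vector_mult_add_rdistrib scaleR_matrix_vector_mult)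

lemma lyap_has_derivative:
  assumes t: "t \<in> {0<..1}"
  shows "(lyap has_real_derivative lyap' t) (at t within {0<..1})"
proof -
  have "((\<lambda>t. A *v y t) has_vector_derivative A *v y' t) (at t within {0<..1})"
    by (rule bounded_linear.has_vector_derivative[OF matrix_vector_mul_bounded_linear deriv[OF t]])
  from DERIV_add[OF DERIV_cmult[OF has_real_derivative_norm_power2[OF deriv[OF t]],
        where c = weight] has_real_derivative_norm_power2[OF this]]
  show ?thesis
    unfolding lyap_def[abs_def] lyap'_def by (simp add: ac_simps)
qed

lemma lyap_derivative_identity:
  assumes t: "t \<in> {0<..1}"
  shows "t * lyap' t = inner (A *v y t) (y t) + t * perturbation t"
proof -
  have "t * lyap' t = 2 * weight * inner (t *\<^sub>R y' t) (y t)
      + 2 * inner (A *v (t *\<^sub>R y' t)) (A *v y t)"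
    by (simp add: lyap'_def linear.scaleR algebra_simps)
  also have "\<dots> = 2 * weight * inner (A *v y t + t *\<^sub>R (B *v y t)) (y t)
      + 2 * inner (A *v (A *v y t) + t *\<^sub>R (A *v (B *v y t))) (A *v y t)"
    by (simp add: ode_scaleR[OF t] linear.scaleR matrix_vector_right_distrib)
  also have "\<dots> = (2 * weight - 2 * d) * inner (A *v y t) (y t) + t * perturbation t"
    by (simp add: A_square_apply perturbation_def inner_add_left inner_commute[of "y t"]
        algebra_simps)
  finally show ?thesis
    by (simp add: weight_def)
qed

lemma quarter_norm_power2_le: "(norm v)\<^sup>2 / 4 \<le> weight * (norm v)\<^sup>2"
  using mult_right_mono[OF weight_ge, of "(norm v)\<^sup>2"] by simp

lemma norm_power2_le_lyap: "(norm (y t))\<^sup>2 \<le> 4 * lyap t"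
proof -
  have "(norm (y t))\<^sup>2 / 4 \<le> weight * (norm (y t))\<^sup>2"
    by (rule quarter_norm_power2_le)
  also have "\<dots> \<le> lyap t"
    by (simp add: lyap_def)
  finally show ?thesis
    by simp
qed

lemma lyap_nonneg: "0 \<le> lyap t"
  using norm_power2_le_lyap[of t] zero_le_power2[of "norm (y t)"] by linarith

lemma lyap_le_norm_power2: "lyap t \<le> (weight + norm_A\<^sup>2) * (norm (y t))\<^sup>2"
proof -
  have "(norm (A *v y t))\<^sup>2 \<le> (norm_A * norm (y t))\<^sup>2"
    by (rule power_mono[OF norm_A_apply_le]) simp
  then show ?thesis
    by (simp add: lyap_def algebra_simps power_mult_distrib)
qed

lemma inner_A_le_lyap: "inner (A *v y t) (y t) \<le> lyap t"
proof -
  have "inner (A *v y t) (y t) \<le> norm (A *v y t) * norm (y t)"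
    by (rule norm_cauchy_schwarz)
  also have "\<dots> \<le> (norm (A *v y t))\<^sup>2 + (norm (y t))\<^sup>2 / 4"
    using zero_le_power2[of "norm (A *v y t) - norm (y t) / 2"]
    by (simp add: power2_eq_square algebra_simps)
  also have "\<dots> \<le> lyap t"
    using quarter_norm_power2_le[of "y t"] by (simp add: lyap_def)
  finally show ?thesis .
qed

lemma abs_inner_A_le_lyap: "\<bar>inner (A *v y t) (y t)\<bar> \<le> 4 * norm_A * lyap t"
proof -
  have "\<bar>inner (A *v y t) (y t)\<bar> \<le> norm (A *v y t) * norm (y t)"
    by (rule Cauchy_Schwarz_ineq2)
  also have "\<dots> \<le> norm_A * norm (y t) * norm (y t)"
    by (rule mult_right_mono[OF norm_A_apply_le]) simp
  also have "\<dots> = norm_A * (norm (y t))\<^sup>2"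
    by (simp add: power2_eq_square)
  also have "\<dots> \<le> norm_A * (4 * lyap t)"
    by (rule mult_left_mono[OF norm_power2_le_lyap norm_A_nonneg])
  finally show ?thesis
    by simp
qed

lemma abs_inner_B_le: "\<bar>inner (B *v v) v\<bar> \<le> norm_B * (norm v)\<^sup>2"
proof -
  have "\<bar>inner (B *v v) v\<bar> \<le> norm (B *v v) * norm v"
    by (rule Cauchy_Schwarz_ineq2)
  also have "\<dots> \<le> norm_B * norm v * norm v"
    by (rule mult_right_mono[OF norm_B_apply_le]) simp
  finally show ?thesis
    by (simp add: power2_eq_square mult.assoc)
qed

lemma abs_inner_AB_le:
  "\<bar>inner (A *v (B *v v)) (A *v v)\<bar> \<le> norm_A\<^sup>2 * norm_B * (norm v)\<^sup>2"
proof -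
  have "\<bar>inner (A *v (B *v v)) (A *v v)\<bar> \<le> norm (A *v (B *v v)) * norm (A *v v)"
    by (rule Cauchy_Schwarz_ineq2)
  also have "\<dots> \<le> (norm_A * (norm_B * norm v)) * (norm_A * norm v)"
    by (intro mult_mono order.trans[OF norm_A_apply_le] mult_left_mono norm_B_apply_le
        norm_A_apply_le norm_A_nonneg) (simp_all add: norm_A_nonneg norm_B_nonneg)
  finally show ?thesis
    by (simp add: power2_eq_square algebra_simps)
qed

lemma abs_perturbation_le: "\<bar>perturbation t\<bar> \<le> perturbation_bound * lyap t"
proof -
  have "\<bar>perturbation t\<bar> \<le> \<bar>2 * weight * inner (B *v y t) (y t)\<bar>
      + \<bar>2 * inner (A *v (B *v y t)) (A *v y t)\<bar>"
    unfolding perturbation_def by (rule abs_triangle_ineq)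
  also have "\<dots> = 2 * weight * \<bar>inner (B *v y t) (y t)\<bar>
      + 2 * \<bar>inner (A *v (B *v y t)) (A *v y t)\<bar>"
    using weight_ge by (simp add: abs_mult)
  also have "\<dots> \<le> 2 * weight * (norm_B * (norm (y t))\<^sup>2)
      + 2 * (norm_A\<^sup>2 * norm_B * (norm (y t))\<^sup>2)"
    using weight_ge by (intro add_mono mult_left_mono abs_inner_B_le abs_inner_AB_le) simp_all
  also have "\<dots> = 2 * (weight + norm_A\<^sup>2) * norm_B * (norm (y t))\<^sup>2"
    by (simp add: algebra_simps)
  also have "\<dots> \<le> 2 * (weight + norm_A\<^sup>2) * norm_B * (4 * lyap t)"
    using weight_ge norm_B_nonneg by (intro mult_left_mono norm_power2_le_lyap) simp_all
  finally show ?thesis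
    by (simp add: perturbation_bound_def algebra_simps)
qed

lemma lyap_derivative_le:
  assumes "t \<in> {0<..1}"
  shows "t * lyap' t \<le> (1 + perturbation_bound * t) * lyap t"
proof -
  have "t * perturbation t \<le> t * (perturbation_bound * lyap t)"
    using abs_perturbation_le[of t] assms by (intro mult_left_mono) auto
  then show ?thesis
    using lyap_derivative_identity[OF assms] inner_A_le_lyap[of t] by (simp add: algebra_simps)
qed

lemma lyap_derivative_ge:
  assumes "t \<in> {0<..1}"
  shows "- (4 * norm_A + perturbation_bound * t) * lyap t \<le> t * lyap' t"
proof -
  have "t * (- perturbation_bound * lyap t) \<le> t * perturbation t"
    using abs_perturbation_le[of t] assms by (intro mult_left_mono) auto
  then show ?thesis
    using lyap_derivative_identity[OF assms] abs_inner_A_le_lyap[of t] by (simp add: algebra_simps)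
qed

lemma lyap_one_pos:
  assumes x0: "x0 \<in> {0<..1}" and "y x0 \<noteq> 0"
  shows "0 < lyap 1"
proof -
  define M where "M = 4 * norm_A / x0 + perturbation_bound"
  have "lyap x0 * exp (M * x0) \<le> lyap 1 * exp (M * 1)"
  proof (rule exp_scaled_mono_if_deriv_ge)
    show "x0 \<le> 1"
      using x0 by simp
    fix t assume t: "t \<in> {x0..1}"
    then have t01: "t \<in> {0<..1}"
      using x0 by auto
    show "(lyap has_real_derivative lyap' t) (at t within {x0..1})"
      by (rule has_field_derivative_subset[OF lyap_has_derivative[OF t01]]) (use x0 in auto)
    have "1 * (4 * norm_A * lyap t) \<le> (t / x0) * (4 * norm_A * lyap t)"
      using t x0 norm_A_nonneg lyap_nonneg[of t] by (intro mult_right_mono) auto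
    then have "t * (- M * lyap t) \<le> t * lyap' t"
      using lyap_derivative_ge[OF t01] by (simp add: M_def algebra_simps)
    then show "- M * lyap t \<le> lyap' t"
      using t01 by (metis greaterThanAtMost_iff mult_le_cancel_left_pos)
  qed
  moreover have "0 < lyap x0"
  proof -
    have "0 < (norm (y x0))\<^sup>2"
      using \<open>y x0 \<noteq> 0\<close> by simp
    then show ?thesis
      using norm_power2_le_lyap[of x0] by linarith
  qed
  ultimately have "0 < lyap 1 * exp (M * 1)"
    by (meson exp_gt_zero mult_pos_pos order.strict_trans2)
  then show ?thesis
    by (simp add: zero_less_mult_iff)
qed

lemma lyap_ge_linear:
  assumes x: "x \<in> {0<..1}"
  shows "lyap 1 * exp (- perturbation_bound) * x \<le> lyap x"
proof -
  have "lyap 1 * exp (- perturbation_bound * 1) / 1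
      \<le> lyap x * exp (- perturbation_bound * x) / x"
  proof (rule exp_scaled_div_antimono_if_deriv_le)
    fix t assume t: "t \<in> {x..1}"
    then have t01: "t \<in> {0<..1}"
      using x by auto
    show "(lyap has_real_derivative lyap' t) (at t within {x..1})"
      by (rule has_field_derivative_subset[OF lyap_has_derivative[OF t01]]) (use x in auto)
    show "t * lyap' t \<le> (1 + perturbation_bound * t) * lyap t"
      by (rule lyap_derivative_le[OF t01])
  qed (use x in auto)
  also have "\<dots> \<le> lyap x / x"
    using x perturbation_bound_nonneg lyap_nonneg[of x]
    by (intro divide_right_mono mult_left_le) auto
  finally show ?thesis
    using x by (simp add: pos_le_divide_eq)
qed

theorem norm_ge_const_mul_sqrt:
  assumes "\<exists>x\<in>{0<..1}. y x \<noteq> 0"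
  shows "\<exists>\<epsilon>>0. \<forall>x\<in>{0<..1}. norm (y x) \<ge> \<epsilon> * sqrt x"
proof -
  define L where "L = lyap 1 * exp (- perturbation_bound) / (weight + norm_A\<^sup>2)"
  have denominator_pos: "0 < weight + norm_A\<^sup>2"
    using weight_ge by (simp add: add_pos_nonneg)
  have "0 < L"
    using lyap_one_pos assms denominator_pos by (auto simp: L_def)
  moreover have "sqrt L * sqrt x \<le> norm (y x)" if x: "x \<in> {0<..1}" for x
  proof -
    have "L * x = lyap 1 * exp (- perturbation_bound) * x / (weight + norm_A\<^sup>2)"
      by (simp add: L_def)
    also have "\<dots> \<le> lyap x / (weight + norm_A\<^sup>2)"
      using denominator_pos by (intro divide_right_mono lyap_ge_linear[OF x]) simp
    also have "\<dots> \<le> (norm (y x))\<^sup>2"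
      using lyap_le_norm_power2[of x] denominator_pos by (simp add: pos_divide_le_eq mult.commute)
    finally have "sqrt (L * x) \<le> sqrt ((norm (y x))\<^sup>2)"
      by (rule real_sqrt_le_mono)
    then show ?thesis
      by (simp add: real_sqrt_mult)
  qed
  ultimately show ?thesis
    by (intro exI[of _ "sqrt L"]) auto
qed

end

theorem mainTheorem3:
  fixes A B :: "complex^2^2"
    and y y' :: "real \<Rightarrow> complex^2"
  assumes trA: "trace A = 0"
    and detA_real: "Im (det A) = 0"
    and detA_ge: "Re (det A) \<ge> - 1/4"
    and deriv: "\<And>x. x \<in> {0<..1} \<Longrightarrow> (y has_vector_derivative y' x) (at x within {0<..1})"
    and ode: "\<And>x. x \<in> {0<..1} \<Longrightarrow> of_real x *s y' x = (A + x *\<^sub>R B) *v y x"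
    and nonzero: "\<exists>x\<in>{0<..1}. y x \<noteq> 0"
  shows "\<exists>\<epsilon>>0. \<forall>x\<in>{0<..1}. norm (y x) \<ge> \<epsilon> * sqrt x"
proof -
  have "det A = of_real (Re (det A))"
    using detA_real by (simp add: complex_eq_iff)
  then have "A ** A = mat (of_real (- Re (det A)))"
    using trace_zero_matrix_square_2[OF trA] by (metis of_real_minus)
  then interpret regular_singular_system A B "Re (det A)" y y'
    using detA_ge deriv ode by unfold_locales auto
  show ?thesis
    using nonzero by (rule norm_ge_const_mul_sqrt)
qed

end
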